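(* Let $F$ (of size $N$) and $G$ (of size $M$) be Fourier matrices. (a) If $\gcd(M,N)=1$, then the number of entries of $F\otimes G$ equal to $1$ is the product of the number of entries of $F$ equal to $1$ and the number of entries of $G$ equal to $1$ (equivalently, the multiplicity of $1$ in the spectrum of $\mathcal I_{(MN)^{-1/2}F\otimes G}$ is the product of those for $\mathcal I_{N^{-1/2}F}$ and $\mathcal I_{M^{-1/2}G}$); that is, $\mathbf D(F\otimes G)=\mathbf D(F)\cdot\mathbf D(G)$. (b) If $\gcd(M,N)>1$, then $\mathbf D(F\otimes G)>\mathbf D(F)\cdot\mathbf D(G)$.
   Context: For $n\ge1$, $F_n$ is the $n\times n$ matrix with entries $e^{2\pi i\,jk/n}$, $j,k\in\{0,\dots,n-1\}$; a Fourier matrix is a Kronecker product $F_{N_1}\otimes\cdots\otimes F_{N_r}$. For a unitary $W$ with no zero entries, $\mathcal I_W=\mathcal C_W^{-1}\mathcal D_W$ where $\mathcal C_W(X)=(X\circ W)W^*$, $\mathcal D_W(X)=W(\overline X\circ W)^*$ ($\circ$ entrywise product). For a rescaled unitary $V$ with no zero entries, $\mathbf D(V)=\dim_{\mathbb R}\{iR\circ V:\ R\text{ real},\ (iR\circ V)V^*\text{ antihermitian}\}$; for a Fourier matrix this equals the number of its entries equal to $1$. *)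

theory Defs
  imports Complex_Main
begin

text \<open>Matrices of size n are represented as functions nat => nat => complex,
  only the entries with both indices < n being relevant.\<close>

definition fourier :: "nat \<Rightarrow> nat \<Rightarrow> nat \<Rightarrow> complex" where
  "fourier n j k = cis (2 * pi * real (j * k) / real n)"

text \<open>Kronecker product A (x) B where B has size m:
  (A (x) B) (i1*m+i2) (j1*m+j2) = A i1 j1 * B i2 j2.\<close>
definition kron :: "(nat \<Rightarrow> nat \<Rightarrow> complex) \<Rightarrow> nat \<Rightarrow> (nat \<Rightarrow> nat \<Rightarrow> complex)
    \<Rightarrow> nat \<Rightarrow> nat \<Rightarrow> complex" where
  "kron A m B i j = A (i div m) (j div m) * B (i mod m) (j mod m)"

text \<open>Fourier matrix F_{N_1} (x) ... (x) F_{N_r}; its size is prod_list Ns.\<close>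
fun fourier_matrix :: "nat list \<Rightarrow> nat \<Rightarrow> nat \<Rightarrow> complex" where
  "fourier_matrix [] = (\<lambda>i j. 1)"
| "fourier_matrix (n # Ns) = kron (fourier n) (prod_list Ns) (fourier_matrix Ns)"

definition num_ones :: "nat \<Rightarrow> (nat \<Rightarrow> nat \<Rightarrow> complex) \<Rightarrow> nat" where
  "num_ones n A = card {(j, k). j < n \<and> k < n \<and> A j k = 1}"

text \<open>The set {iR o V : R real n x n, (iR o V) V^* antihermitian}.\<close>
definition defect_space :: "nat \<Rightarrow> (nat \<Rightarrow> nat \<Rightarrow> complex) \<Rightarrow> (nat \<Rightarrow> nat \<Rightarrow> complex) set" where
  "defect_space n V = {W. \<exists>R :: nat \<Rightarrow> nat \<Rightarrow> real.
      (\<forall>j k. \<not> (j < n \<and> k < n) \<longrightarrow> R j k = 0) \<and>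
      (\<forall>j k. W j k = \<i> * complex_of_real (R j k) * V j k) \<and>
      (\<forall>j<n. \<forall>k<n. (\<Sum>l<n. W k l * cnj (V j l)) = - cnj (\<Sum>l<n. W j l * cnj (V k l)))}"

definition real_lin_indep :: "nat \<Rightarrow> (nat \<Rightarrow> nat \<Rightarrow> complex) set \<Rightarrow> bool" where
  "real_lin_indep n S \<longleftrightarrow> finite S \<and>
     (\<forall>c :: (nat \<Rightarrow> nat \<Rightarrow> complex) \<Rightarrow> real.
        (\<forall>j<n. \<forall>k<n. (\<Sum>W\<in>S. complex_of_real (c W) * W j k) = 0) \<longrightarrow> (\<forall>W\<in>S. c W = 0))"

definition real_dim :: "nat \<Rightarrow> (nat \<Rightarrow> nat \<Rightarrow> complex) set \<Rightarrow> nat" where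
  "real_dim n T = Max {card S | S. S \<subseteq> T \<and> real_lin_indep n S}"

definition defect :: "nat \<Rightarrow> (nat \<Rightarrow> nat \<Rightarrow> complex) \<Rightarrow> nat" where
  "defect n V = real_dim n (defect_space n V)"

end

theory Submission
  imports Defs "HOL-Library.Function_Algebras" "HOL-Computational_Algebra.Primes"
begin

text \<open>If the rows of a unitary-up-to-scaling matrix \<open>V\<close> form a group under entrywise
  multiplication (as for Fourier matrices and their Kronecker products), the real matrices
  \<open>cas (e, d)\<close>, built from \<open>V e j * cnj (V d l)\<close>, form an orthogonal basis of all real matrices.
  Expanding \<open>R\<close> in this basis, the antihermitian condition on \<open>(iR \<circ> V) V\<^sup>*\<close> kills exactly
  the coefficients at positions \<open>(e, d)\<close> with \<open>V e d \<noteq> 1\<close>, and the remaining basis elements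
  satisfy it; hence \<open>D(V)\<close> is the number of entries equal to 1.
  The entries of \<open>F \<otimes> G\<close> are products of an \<open>N\<close>-th and an \<open>M\<close>-th root of unity.  If \<open>N\<close> and
  \<open>M\<close> are coprime, such a product is 1 only if both factors are; a common prime factor \<open>p\<close>
  instead gives a primitive \<open>p\<close>-th root \<open>\<omega>\<close> in \<open>F\<close> and \<open>\<omega>\<^sup>-\<^sup>1\<close> in \<open>G\<close>, an additional 1.\<close>

section \<open>Real dimension of spaces of matrices\<close>

definition matrix_scale :: "real \<Rightarrow> (nat \<Rightarrow> nat \<Rightarrow> complex) \<Rightarrow> nat \<Rightarrow> nat \<Rightarrow> complex" where
  "matrix_scale r M = (\<lambda>j k. complex_of_real r * M j k)"

interpretation real_matrices: vector_space matrix_scale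
  by unfold_locales (auto simp: matrix_scale_def fun_eq_iff algebra_simps)

lemma sum_matrix_apply: "(\<Sum>x\<in>A. M x) j k = (\<Sum>x\<in>A. M x j k :: complex)"
  by (induct A rule: infinite_finite_induct) auto

lemma real_lin_indep_imp_independent:
  assumes "real_lin_indep n S"
  shows "real_matrices.independent S"
proof (rule real_matrices.independent_if_scalars_zero)
  show "finite S" using assms unfolding real_lin_indep_def by blast
next
  fix c M assume zero: "(\<Sum>M\<in>S. matrix_scale (c M) M) = 0" and "M \<in> S"
  have "(\<Sum>M\<in>S. complex_of_real (c M) * M j k) = (\<Sum>M\<in>S. matrix_scale (c M) M) j k" for j k
    by (simp add: sum_matrix_apply matrix_scale_def)
  then have "\<forall>j<n. \<forall>k<n. (\<Sum>M\<in>S. complex_of_real (c M) * M j k) = 0"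
    by (simp add: zero)
  with assms \<open>M \<in> S\<close> show "c M = 0" unfolding real_lin_indep_def by blast
qed

lemma real_dim_eq_card_basis:
  assumes "B \<subseteq> T" "real_lin_indep n B" "T \<subseteq> real_matrices.span B"
  shows "real_dim n T = card B"
proof -
  let ?A = "{card S |S. S \<subseteq> T \<and> real_lin_indep n S}"
  have "finite B" using assms(2) unfolding real_lin_indep_def by blast
  have le: "k \<le> card B" if k: "k \<in> ?A" for k
  proof -
    obtain S where S: "k = card S" "S \<subseteq> T" "real_lin_indep n S" using k by blast
    show ?thesis
      using real_matrices.independent_span_bound[OF \<open>finite B\<close> real_lin_indep_imp_independent[OF S(3)]]
        S assms(3) by auto
  qed
  have "finite ?A"
    by (rule finite_subset[of _ "{..card B}"]) (use le in auto)
  moreover have "card B \<in> ?A" using assms(1,2) by blast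
  ultimately show ?thesis
    unfolding real_dim_def using le by (intro Max_eqI)
qed

definition one_entries :: "nat \<Rightarrow> (nat \<Rightarrow> nat \<Rightarrow> complex) \<Rightarrow> (nat \<times> nat) set" where
  "one_entries n V = {(j, k). j < n \<and> k < n \<and> V j k = 1}"

lemma num_ones_eq_card: "num_ones n V = card (one_entries n V)"
  unfolding num_ones_def one_entries_def ..

lemma one_entries_subset: "one_entries n V \<subseteq> {..<n} \<times> {..<n}"
  unfolding one_entries_def by auto

lemma finite_one_entries: "finite (one_entries n V)"
  using one_entries_subset finite_subset by blast

section \<open>Character tables and their defect\<close>

text \<open>Symmetric matrices with first row 1 whose rows are orthogonal and closed under entrywise
  product and conjugation: the character tables of finite abelian groups.\<close>
locale fourier_like =
  fixes n :: nat and V :: "nat \<Rightarrow> nat \<Rightarrow> complex"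
  assumes size_pos: "0 < n"
    and symmetric: "V j l = V l j"
    and unimodular: "cnj (V j l) * V j l = 1"
    and root_of_unity: "V j l ^ n = 1"
    and first_row: "V 0 l = 1"
    and rows_orthogonal:
      "e < n \<Longrightarrow> e' < n \<Longrightarrow> (\<Sum>j<n. V e j * cnj (V e' j)) = (if e = e' then of_nat n else 0)"
    and rows_mult_closed: "a < n \<Longrightarrow> b < n \<Longrightarrow> \<exists>x<n. \<forall>l<n. V x l = V a l * V b l"
    and rows_cnj_closed: "a < n \<Longrightarrow> \<exists>x<n. \<forall>l<n. V x l = cnj (V a l)"
begin

abbreviation index_pairs :: "(nat \<times> nat) set" where
  "index_pairs \<equiv> {..<n} \<times> {..<n}"

lemma unimodular': "V j l * cnj (V j l) = 1"
  using unimodular by (simp add: mult.commute)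

lemma nonzero: "V j l \<noteq> 0"
  using unimodular by (metis mult_zero_right zero_neq_one)

lemma sum_row_product_real:
  assumes "a < n" "b < n"
  shows "cnj (\<Sum>j<n. V a j * V b j) = (\<Sum>j<n. V a j * V b j)"
proof -
  obtain x where x: "x < n" "\<forall>l<n. V x l = cnj (V b l)"
    using rows_cnj_closed[OF assms(2)] by auto
  have "(\<Sum>j<n. V a j * V b j) = (\<Sum>j<n. V a j * cnj (V x j))"
    by (rule sum.cong) (auto simp: x)
  also have "\<dots> = (if a = x then of_nat n else 0)"
    using rows_orthogonal[OF assms(1) x(1)] by simp
  finally show ?thesis by simp
qed

definition cross :: "nat \<times> nat \<Rightarrow> nat \<times> nat \<Rightarrow> complex" where
  "cross p q = V (fst p) (fst q) * cnj (V (snd p) (snd q))"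

text \<open>Realification of the orthogonal basis \<open>cross p\<close> in the manner of the Hartley kernel
  \<open>cas = cos + sin\<close>: unlike \<open>Re\<close> or \<open>Im\<close> alone, \<open>Re + Im\<close> keeps the basis orthogonal.\<close>
definition cas :: "nat \<times> nat \<Rightarrow> nat \<times> nat \<Rightarrow> real" where
  "cas p q = Re (cross p q) + Im (cross p q)"

lemma of_real_cas:
  "complex_of_real (cas p q) = ((1 - \<i>) * cross p q + (1 + \<i>) * cnj (cross p q)) / 2"
  unfolding cas_def by (simp add: complex_eq_iff algebra_simps)

lemma cas_commute: "cas p q = cas q p"
  unfolding cas_def cross_def by (metis symmetric)

lemma sum_cross_mult:
  "(\<Sum>r\<in>index_pairs. cross (e, d) r * cross (e', d') r)
     = (\<Sum>j<n. V e j * V e' j) * cnj (\<Sum>l<n. V d l * V d' l)"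
proof -
  have "(\<Sum>j<n. V e j * V e' j) * cnj (\<Sum>l<n. V d l * V d' l)
      = (\<Sum>j<n. \<Sum>l<n. (V e j * V e' j) * (cnj (V d l) * cnj (V d' l)))"
    by (simp add: sum_product)
  then show ?thesis
    by (simp add: sum.cartesian_product' cross_def mult_ac)
qed

lemma sum_cross_mult_cnj:
  "(\<Sum>r\<in>index_pairs. cross (e, d) r * cnj (cross (e', d') r))
     = (\<Sum>j<n. V e j * cnj (V e' j)) * cnj (\<Sum>l<n. V d l * cnj (V d' l))"
proof -
  have "(\<Sum>j<n. V e j * cnj (V e' j)) * cnj (\<Sum>l<n. V d l * cnj (V d' l))
      = (\<Sum>j<n. \<Sum>l<n. (V e j * cnj (V e' j)) * (cnj (V d l) * V d' l))"
    by (simp add: sum_product)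
  then show ?thesis
    by (simp add: sum.cartesian_product' cross_def mult_ac)
qed

lemma cas_orthogonal:
  assumes "p \<in> index_pairs" "q \<in> index_pairs"
  shows "(\<Sum>r\<in>index_pairs. cas p r * cas q r) = (if p = q then real n ^ 2 else 0)"
proof -
  obtain e d e' d' where pq: "p = (e, d)" "q = (e', d')" "e < n" "d < n" "e' < n" "d' < n"
    using assms by auto
  define X where "X = (\<Sum>r\<in>index_pairs. cross p r * cross q r)"
  define Y where "Y = (\<Sum>r\<in>index_pairs. cross p r * cnj (cross q r))"
  have X_real: "cnj X = X"
    unfolding X_def pq(1,2) sum_cross_mult using sum_row_product_real pq by simp
  have Y_eq: "Y = (if p = q then of_nat n ^ 2 else 0)"
    unfolding Y_def pq(1,2) sum_cross_mult_cnj using rows_orthogonal pq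
    by (simp add: power2_eq_square)
  have "complex_of_real (\<Sum>r\<in>index_pairs. cas p r * cas q r)
     = (\<Sum>r\<in>index_pairs. ((1 - \<i>)^2 * (cross p r * cross q r)
          + 2 * (cross p r * cnj (cross q r)) + 2 * cnj (cross p r * cnj (cross q r))
          + (1 + \<i>)^2 * cnj (cross p r * cross q r)) / 4)"
    by (simp add: of_real_cas power2_eq_square algebra_simps)
  also have "\<dots> = ((1 - \<i>)^2 * X + 2 * Y + 2 * cnj Y + (1 + \<i>)^2 * cnj X) / 4"
    unfolding X_def Y_def cnj_sum sum_divide_distrib[symmetric]
    by (simp only: sum.distrib sum_distrib_left)
  also have "\<dots> = Y"
    using X_real Y_eq by (simp add: power2_eq_square algebra_simps)
  also have "\<dots> = complex_of_real (if p = q then real n ^ 2 else 0)"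
    using Y_eq by simp
  finally show ?thesis
    by (simp only: of_real_eq_iff)
qed

lemma cas_expansion:
  assumes "r \<in> index_pairs"
  shows "(\<Sum>p\<in>index_pairs. (\<Sum>q\<in>index_pairs. R q * cas p q) * cas p r) = real n ^ 2 * R r"
proof -
  have "(\<Sum>p\<in>index_pairs. (\<Sum>q\<in>index_pairs. R q * cas p q) * cas p r)
      = (\<Sum>p\<in>index_pairs. \<Sum>q\<in>index_pairs. R q * (cas q p * cas r p))"
    unfolding sum_distrib_right by (intro sum.cong refl) (simp add: cas_commute mult_ac)
  also have "\<dots> = (\<Sum>q\<in>index_pairs. R q * (\<Sum>p\<in>index_pairs. cas q p * cas r p))"
    unfolding sum_distrib_left by (rule sum.swap)
  also have "\<dots> = (\<Sum>q\<in>index_pairs. R q * (if q = r then real n ^ 2 else 0))"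
    using cas_orthogonal assms by (intro sum.cong refl) auto
  also have "\<dots> = real n ^ 2 * R r"
    using assms by (simp add: if_distrib sum.delta' mult.commute cong: if_cong)
  finally show ?thesis .
qed

definition defect_condition :: "(nat \<Rightarrow> nat \<Rightarrow> real) \<Rightarrow> bool" where
  "defect_condition R \<longleftrightarrow> (\<forall>j<n. \<forall>k<n.
     (\<Sum>l<n. (complex_of_real (R k l) - complex_of_real (R j l)) * (V k l * cnj (V j l))) = 0)"

lemma antihermitian_iff_defect_condition:
  assumes W: "\<forall>j l. W j l = \<i> * complex_of_real (R j l) * V j l"
  shows "(\<forall>j<n. \<forall>k<n. (\<Sum>l<n. W k l * cnj (V j l)) = - cnj (\<Sum>l<n. W j l * cnj (V k l)))
     \<longleftrightarrow> defect_condition R"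
proof -
  have "(\<Sum>l<n. W k l * cnj (V j l)) + cnj (\<Sum>l<n. W j l * cnj (V k l))
      = \<i> * (\<Sum>l<n. (complex_of_real (R k l) - complex_of_real (R j l)) * (V k l * cnj (V j l)))"
    for j k
  proof -
    have "(\<Sum>l<n. W k l * cnj (V j l)) + cnj (\<Sum>l<n. W j l * cnj (V k l))
      = (\<Sum>l<n. \<i> * ((complex_of_real (R k l) - complex_of_real (R j l)) * (V k l * cnj (V j l))))"
      by (simp add: W sum.distrib[symmetric] algebra_simps)
    then show ?thesis by (simp add: sum_distrib_left)
  qed
  then have "(\<Sum>l<n. W k l * cnj (V j l)) = - cnj (\<Sum>l<n. W j l * cnj (V k l))
      \<longleftrightarrow> (\<Sum>l<n. (complex_of_real (R k l) - complex_of_real (R j l)) * (V k l * cnj (V j l))) = 0"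
    for j k
    by (simp flip: add_eq_0_iff2)
  then show ?thesis
    unfolding defect_condition_def by presburger
qed

lemma cross_defect_sum:
  assumes "e < n" "d < n" "V e d = 1" "j < n" "k < n"
  shows "(\<Sum>l<n. (cross (e, d) (k, l) - cross (e, d) (j, l)) * (V k l * cnj (V j l))) = 0"
proof -
  obtain y where y: "y < n" "\<forall>l<n. V y l = V j l * V d l"
    using rows_mult_closed assms by blast
  have "(\<Sum>l<n. (cross (e, d) (k, l) - cross (e, d) (j, l)) * (V k l * cnj (V j l)))
      = (V e k - V e j) * (\<Sum>l<n. V k l * cnj (V y l))"
    unfolding sum_distrib_left
    by (intro sum.cong refl) (simp add: cross_def y unimodular' algebra_simps)
  also have "\<dots> = 0"
  proof (cases "k = y")
    case True
    then have "V e k = V e j"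
      using y assms by (metis symmetric mult.right_neutral)
    then show ?thesis by simp
  next
    case False
    then show ?thesis using rows_orthogonal[OF assms(5) y(1)] by simp
  qed
  finally show ?thesis .
qed

lemma cnj_cross_defect_sum:
  assumes "e < n" "d < n" "V e d = 1" "j < n" "k < n"
  shows "(\<Sum>l<n. (cnj (cross (e, d) (k, l)) - cnj (cross (e, d) (j, l))) * (V k l * cnj (V j l))) = 0"
proof -
  obtain y where y: "y < n" "\<forall>l<n. V y l = V d l * V k l"
    using rows_mult_closed assms by blast
  have "(\<Sum>l<n. (cnj (cross (e, d) (k, l)) - cnj (cross (e, d) (j, l))) * (V k l * cnj (V j l)))
      = (cnj (V e k) - cnj (V e j)) * (\<Sum>l<n. V y l * cnj (V j l))"
    unfolding sum_distrib_left by (intro sum.cong refl) (simp add: cross_def y algebra_simps)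
  also have "\<dots> = 0"
  proof (cases "y = j")
    case True
    then have "V e k = V e j"
      using y assms by (metis symmetric mult.left_neutral)
    then show ?thesis by simp
  next
    case False
    then show ?thesis using rows_orthogonal[OF y(1) assms(4)] by simp
  qed
  finally show ?thesis .
qed

lemma defect_condition_cas:
  assumes "e < n" "d < n" "V e d = 1"
  shows "defect_condition (\<lambda>j l. cas (e, d) (j, l))"
  unfolding defect_condition_def
proof (intro allI impI)
  fix j k assume "j < n" "k < n"
  have "(\<Sum>l<n. (complex_of_real (cas (e, d) (k, l)) - complex_of_real (cas (e, d) (j, l)))
          * (V k l * cnj (V j l)))
    = ((1 - \<i>) * (\<Sum>l<n. (cross (e, d) (k, l) - cross (e, d) (j, l)) * (V k l * cnj (V j l)))
      + (1 + \<i>) * (\<Sum>l<n. (cnj (cross (e, d) (k, l)) - cnj (cross (e, d) (j, l)))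
          * (V k l * cnj (V j l)))) / 2"
    unfolding of_real_cas sum_distrib_left sum_divide_distrib sum.distrib[symmetric]
    by (intro sum.cong refl) (simp add: field_simps)
  then show "(\<Sum>l<n. (complex_of_real (cas (e, d) (k, l)) - complex_of_real (cas (e, d) (j, l)))
          * (V k l * cnj (V j l))) = 0"
    using cross_defect_sum[OF assms \<open>j < n\<close> \<open>k < n\<close>]
      cnj_cross_defect_sum[OF assms \<open>j < n\<close> \<open>k < n\<close>] by simp
qed

lemma rows_inj:
  assumes "a < n" "b < n" "\<forall>l<n. V a l = V b l"
  shows "a = b"
proof -
  have "(\<Sum>l<n. V a l * cnj (V b l)) = of_nat n"
    using assms(3) by (simp add: unimodular')
  then show ?thesis
    using rows_orthogonal[OF assms(1,2)] size_pos by (auto split: if_splits)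
qed

lemma row_shift_bij:
  assumes "d < n"
  obtains \<sigma> where "bij_betw \<sigma> {..<n} {..<n}" "\<And>k l. k < n \<Longrightarrow> l < n \<Longrightarrow> V (\<sigma> k) l = V k l * V d l"
proof -
  define \<sigma> where "\<sigma> k = (SOME x. x < n \<and> (\<forall>l<n. V x l = V k l * V d l))" for k
  have \<sigma>: "\<sigma> k < n \<and> (\<forall>l<n. V (\<sigma> k) l = V k l * V d l)" if "k < n" for k
    unfolding \<sigma>_def by (rule someI_ex) (use rows_mult_closed[OF that assms] in blast)
  have "inj_on \<sigma> {..<n}"
  proof (rule inj_onI)
    fix a b assume "a \<in> {..<n}" "b \<in> {..<n}" "\<sigma> a = \<sigma> b"
    then have "\<forall>l<n. V a l * V d l = V b l * V d l"
      using \<sigma> by (metis lessThan_iff)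
    then show "a = b"
      using rows_inj \<open>a \<in> {..<n}\<close> \<open>b \<in> {..<n}\<close> nonzero by auto
  qed
  moreover have "\<sigma> ` {..<n} \<subseteq> {..<n}"
    using \<sigma> by auto
  ultimately have "bij_betw \<sigma> {..<n} {..<n}"
    by (simp add: bij_betw_def endo_inj_surj)
  with \<sigma> show ?thesis using that by blast
qed

text \<open>Multiplication by row \<open>d\<close> permutes the rows, and the defect condition makes
  \<open>\<Sum>l. R j l * cnj (V d l)\<close> invariant under it; reindexing the sum by this permutation
  multiplies it by \<open>V e d \<noteq> 1\<close>, so it vanishes.\<close>
lemma sum_cross_vanishes:
  assumes R: "defect_condition R" and e: "e < n" and d: "d < n" and ed: "V e d \<noteq> 1"
  shows "(\<Sum>j<n. \<Sum>l<n. complex_of_real (R j l) * cross (e, d) (j, l)) = 0"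
proof -
  define g where "g j = (\<Sum>l<n. complex_of_real (R j l) * cnj (V d l))" for j
  obtain \<sigma> where \<sigma>: "bij_betw \<sigma> {..<n} {..<n}"
    and \<sigma>_row: "\<And>k l. k < n \<Longrightarrow> l < n \<Longrightarrow> V (\<sigma> k) l = V k l * V d l"
    using row_shift_bij[OF d] by blast
  have g_\<sigma>: "g (\<sigma> k) = g k" if k: "k < n" for k
  proof -
    have "V k l * cnj (V (\<sigma> k) l) = cnj (V d l)" if "l < n" for l
      using \<sigma>_row[OF k that] unimodular'[of k l] by (simp add: algebra_simps)
    moreover have "\<sigma> k < n" using \<sigma> k by (auto dest: bij_betw_apply)
    ultimately have "(\<Sum>l<n. (complex_of_real (R k l) - complex_of_real (R (\<sigma> k) l)) * cnj (V d l)) = 0"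
      using R k unfolding defect_condition_def by (metis (no_types, lifting) lessThan_iff sum.cong)
    then show ?thesis unfolding g_def by (simp add: algebra_simps sum_subtractf)
  qed
  have "(\<Sum>j<n. \<Sum>l<n. complex_of_real (R j l) * cross (e, d) (j, l)) = (\<Sum>j<n. V e j * g j)"
    unfolding g_def sum_distrib_left by (intro sum.cong refl) (simp add: cross_def mult_ac)
  also have "\<dots> = (\<Sum>k<n. V e (\<sigma> k) * g (\<sigma> k))"
    using sum.reindex_bij_betw[OF \<sigma>, of "\<lambda>j. V e j * g j"] by simp
  also have "\<dots> = V e d * (\<Sum>k<n. V e k * g k)"
    unfolding sum_distrib_left
    using \<sigma>_row e g_\<sigma> by (intro sum.cong refl) (simp add: symmetric[of e])
  also have "(\<Sum>k<n. V e k * g k) = (\<Sum>j<n. \<Sum>l<n. complex_of_real (R j l) * cross (e, d) (j, l))"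
    unfolding g_def sum_distrib_left by (intro sum.cong refl) (simp add: cross_def mult_ac)
  finally have "(1 - V e d) * (\<Sum>j<n. \<Sum>l<n. complex_of_real (R j l) * cross (e, d) (j, l)) = 0"
    by (simp add: algebra_simps)
  then show ?thesis using ed by simp
qed

lemma sum_cas_vanishes:
  assumes "defect_condition R" "e < n" "d < n" "V e d \<noteq> 1"
  shows "(\<Sum>(j, l)\<in>index_pairs. R j l * cas (e, d) (j, l)) = 0"
proof -
  define Z where "Z = (\<Sum>j<n. \<Sum>l<n. complex_of_real (R j l) * cross (e, d) (j, l))"
  have "complex_of_real (\<Sum>(j, l)\<in>index_pairs. R j l * cas (e, d) (j, l))
      = ((1 - \<i>) * Z + (1 + \<i>) * cnj Z) / 2"
    unfolding Z_def cnj_sum sum_distrib_left sum_divide_distrib sum.distrib[symmetric] of_real_sum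
      sum.cartesian_product'
    by (intro sum.cong refl) (simp add: of_real_cas field_simps)
  also have "\<dots> = 0"
    using sum_cross_vanishes[OF assms] by (simp add: Z_def)
  finally show ?thesis by (simp only: of_real_eq_0_iff)
qed

definition cas_coeff :: "(nat \<Rightarrow> nat \<Rightarrow> real) \<Rightarrow> nat \<times> nat \<Rightarrow> real" where
  "cas_coeff R p = (\<Sum>(j, l)\<in>index_pairs. R j l * cas p (j, l)) / real n ^ 2"

lemma cas_coeff_expansion:
  assumes "j < n" "l < n"
  shows "R j l = (\<Sum>p\<in>index_pairs. cas_coeff R p * cas p (j, l))"
  using cas_expansion[of "(j, l)" "case_prod R"] assms size_pos
  by (simp add: cas_coeff_def split_beta sum_divide_distrib[symmetric])

lemma defect_condition_expansion:
  assumes R: "defect_condition R" and "j < n" "l < n"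
  shows "R j l = (\<Sum>p\<in>one_entries n V. cas_coeff R p * cas p (j, l))"
proof -
  have "cas_coeff R p = 0" if "p \<in> index_pairs" "p \<notin> one_entries n V" for p
    using that sum_cas_vanishes[OF R] unfolding cas_coeff_def one_entries_def by auto
  then have "(\<Sum>p\<in>one_entries n V. cas_coeff R p * cas p (j, l))
      = (\<Sum>p\<in>index_pairs. cas_coeff R p * cas p (j, l))"
    by (intro sum.mono_neutral_left) (use one_entries_subset in auto)
  also have "\<dots> = R j l"
    using cas_coeff_expansion assms(2,3) by simp
  finally show ?thesis by simp
qed

lemma cas_independent:
  assumes S: "S \<subseteq> index_pairs" and c: "\<forall>r\<in>index_pairs. (\<Sum>p\<in>S. c p * cas p r) = 0"
    and q: "q \<in> S"
  shows "c q = 0"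
proof -
  have "finite S" using S finite_subset by blast
  have "0 = (\<Sum>r\<in>index_pairs. (\<Sum>p\<in>S. c p * cas p r) * cas q r)"
    using c by (intro sum.neutral[symmetric]) simp
  also have "\<dots> = (\<Sum>p\<in>S. c p * (\<Sum>r\<in>index_pairs. cas p r * cas q r))"
    unfolding sum_distrib_right sum_distrib_left by (subst sum.swap) (simp add: mult_ac)
  also have "\<dots> = (\<Sum>p\<in>S. c p * (if p = q then real n ^ 2 else 0))"
  proof (intro sum.cong refl)
    fix p assume "p \<in> S"
    then have "p \<in> index_pairs" "q \<in> index_pairs" using S q by auto
    then show "c p * (\<Sum>r\<in>index_pairs. cas p r * cas q r) = c p * (if p = q then real n ^ 2 else 0)"
      by (simp only: cas_orthogonal)
  qed
  also have "\<dots> = c q * real n ^ 2"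
    using q \<open>finite S\<close> by (simp add: if_distrib sum.delta' cong: if_cong)
  finally show ?thesis using size_pos by simp
qed

definition defect_generator :: "nat \<times> nat \<Rightarrow> nat \<Rightarrow> nat \<Rightarrow> complex" where
  "defect_generator p = (\<lambda>j l. if j < n \<and> l < n then \<i> * complex_of_real (cas p (j, l)) * V j l else 0)"

lemma defect_generator_apply:
  "j < n \<Longrightarrow> l < n \<Longrightarrow> defect_generator p j l = \<i> * complex_of_real (cas p (j, l)) * V j l"
  by (simp add: defect_generator_def)

lemma defect_generator_in_defect_space:
  assumes "p \<in> one_entries n V"
  shows "defect_generator p \<in> defect_space n V"
proof -
  obtain e d where p: "p = (e, d)" "e < n" "d < n" "V e d = 1"
    using assms unfolding one_entries_def by auto
  define R where "R j l = (if j < n \<and> l < n then cas p (j, l) else 0)" for j l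
  have W: "\<forall>j l. defect_generator p j l = \<i> * complex_of_real (R j l) * V j l"
    by (simp add: defect_generator_def R_def)
  have "defect_condition R \<longleftrightarrow> defect_condition (\<lambda>j l. cas (e, d) (j, l))"
    unfolding defect_condition_def R_def p(1) by (intro all_cong sum.cong refl) auto
  then have "defect_condition R"
    using defect_condition_cas[OF p(2-4)] by blast
  moreover have "\<forall>j l. \<not> (j < n \<and> l < n) \<longrightarrow> R j l = 0"
    by (simp add: R_def)
  ultimately show ?thesis
    unfolding defect_space_def using W antihermitian_iff_defect_condition[OF W] by blast
qed

lemma inj_on_defect_generator: "inj_on defect_generator (one_entries n V)"
proof (rule inj_onI)
  fix p q assume p: "p \<in> one_entries n V" and q: "q \<in> one_entries n V"
    and eq: "defect_generator p = defect_generator q"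
  have pq: "p \<in> index_pairs" "q \<in> index_pairs" using p q one_entries_subset by auto
  have "cas p r = cas q r" if "r \<in> index_pairs" for r
    using that eq nonzero by (auto simp: defect_generator_def fun_eq_iff split: if_splits)
  then have "(\<Sum>r\<in>index_pairs. cas p r * cas p r) = (\<Sum>r\<in>index_pairs. cas p r * cas q r)"
    by simp
  then have "real n ^ 2 = (if p = q then real n ^ 2 else 0)"
    using cas_orthogonal[OF pq(1) pq(1)] cas_orthogonal[OF pq] by simp
  then show "p = q" using size_pos by (auto split: if_splits)
qed

lemma real_lin_indep_defect_generators:
  "real_lin_indep n (defect_generator ` one_entries n V)"
  unfolding real_lin_indep_def
proof (intro conjI allI impI ballI)
  show "finite (defect_generator ` one_entries n V)" using finite_one_entries by simp
  fix c :: "(nat \<Rightarrow> nat \<Rightarrow> complex) \<Rightarrow> real" and W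
  assume zero: "\<forall>j<n. \<forall>k<n. (\<Sum>W\<in>defect_generator ` one_entries n V. complex_of_real (c W) * W j k) = 0"
    and W: "W \<in> defect_generator ` one_entries n V"
  have "(\<Sum>p\<in>one_entries n V. c (defect_generator p) * cas p r) = 0" if r: "r \<in> index_pairs" for r
  proof -
    obtain j k where jk: "r = (j, k)" "j < n" "k < n" using r by auto
    have "(\<i> * V j k) * complex_of_real (\<Sum>p\<in>one_entries n V. c (defect_generator p) * cas p r)
        = (\<Sum>p\<in>one_entries n V. complex_of_real (c (defect_generator p)) * defect_generator p j k)"
      unfolding of_real_sum sum_distrib_left
      by (intro sum.cong refl) (simp add: jk defect_generator_apply mult_ac)
    also have "\<dots> = (\<Sum>W\<in>defect_generator ` one_entries n V. complex_of_real (c W) * W j k)"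
      by (simp only: sum.reindex[OF inj_on_defect_generator] comp_def)
    also have "\<dots> = 0"
      using zero jk by blast
    finally have "complex_of_real (\<Sum>p\<in>one_entries n V. c (defect_generator p) * cas p r) = 0"
      using nonzero[of j k] by (simp only: mult_eq_0_iff complex_i_not_zero simp_thms)
    then show ?thesis by (simp only: of_real_eq_0_iff)
  qed
  moreover obtain q where "q \<in> one_entries n V" "W = defect_generator q"
    using W by blast
  ultimately show "c W = 0"
    using cas_independent[OF one_entries_subset, of "\<lambda>p. c (defect_generator p)"] by blast
qed

lemma defect_space_subset_span:
  "defect_space n V \<subseteq> real_matrices.span (defect_generator ` one_entries n V)"
proof
  fix W assume "W \<in> defect_space n V"
  then obtain R where R0: "\<forall>j k. \<not> (j < n \<and> k < n) \<longrightarrow> R j k = 0"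
    and W: "\<forall>j k. W j k = \<i> * complex_of_real (R j k) * V j k"
    and antiherm: "\<forall>j<n. \<forall>k<n. (\<Sum>l<n. W k l * cnj (V j l)) = - cnj (\<Sum>l<n. W j l * cnj (V k l))"
    unfolding defect_space_def by blast
  have R: "defect_condition R" using antiherm antihermitian_iff_defect_condition[OF W] by blast
  have "W = (\<Sum>p\<in>one_entries n V. matrix_scale (cas_coeff R p) (defect_generator p))"
  proof (intro ext)
    fix j l
    show "W j l = (\<Sum>p\<in>one_entries n V. matrix_scale (cas_coeff R p) (defect_generator p)) j l"
    proof (cases "j < n \<and> l < n")
      case True
      then have "W j l = \<i> * complex_of_real (\<Sum>p\<in>one_entries n V. cas_coeff R p * cas p (j, l)) * V j l"
        using W defect_condition_expansion[OF R] by simp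
      with True show ?thesis
        by (simp add: sum_matrix_apply matrix_scale_def defect_generator_apply
            sum_distrib_left sum_distrib_right mult_ac)
    next
      case False
      then have "defect_generator p j l = 0" for p
        by (auto simp: defect_generator_def)
      with False show ?thesis
        by (simp add: W R0 sum_matrix_apply matrix_scale_def)
    qed
  qed
  also have "\<dots> \<in> real_matrices.span (defect_generator ` one_entries n V)"
    by (intro real_matrices.span_sum real_matrices.span_scale real_matrices.span_base) simp
  finally show "W \<in> real_matrices.span (defect_generator ` one_entries n V)" .
qed

theorem defect_eq_num_ones: "defect n V = num_ones n V"
proof -
  have "defect n V = card (defect_generator ` one_entries n V)"
    unfolding defect_def
    using defect_generator_in_defect_space real_lin_indep_defect_generators defect_space_subset_span
    by (intro real_dim_eq_card_basis) auto
  also have "\<dots> = num_ones n V"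
    by (simp add: card_image[OF inj_on_defect_generator] num_ones_eq_card)
  finally show ?thesis .
qed

end

section \<open>Kronecker products\<close>

lemma kron_index_less: "a < n \<Longrightarrow> b < m \<Longrightarrow> a * m + b < n * (m :: nat)"
proof -
  assume "a < n" "b < m"
  then have "a * m + b < Suc a * m" by simp
  also have "\<dots> \<le> n * m" using \<open>a < n\<close> by (intro mult_le_mono1) simp
  finally show ?thesis .
qed

lemma sum_lessThan_mult:
  assumes "0 < (m :: nat)"
  shows "(\<Sum>j<n * m. f j) = (\<Sum>a<n. \<Sum>b<m. f (a * m + b))"
proof -
  have "bij_betw (\<lambda>(a, b). a * m + b) ({..<n} \<times> {..<m}) {..<n * m}"
    by (rule bij_betw_byWitness[where f' = "\<lambda>j. (j div m, j mod m)"])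
       (use assms in \<open>auto simp: kron_index_less less_mult_imp_div_less\<close>)
  then show ?thesis
    by (simp add: sum.reindex_bij_betw[symmetric] sum.cartesian_product')
qed

lemma kron_rows_orthogonal:
  assumes "fourier_like n A" "fourier_like m B" "e < n * m" "e' < n * m"
  shows "(\<Sum>j<n * m. kron A m B e j * cnj (kron A m B e' j)) = (if e = e' then of_nat (n * m) else 0)"
proof -
  interpret A: fourier_like n A by fact
  interpret B: fourier_like m B by fact
  have m: "0 < m" by (rule B.size_pos)
  have "(\<Sum>j<n * m. kron A m B e j * cnj (kron A m B e' j))
      = (\<Sum>a<n. A (e div m) a * cnj (A (e' div m) a)) * (\<Sum>b<m. B (e mod m) b * cnj (B (e' mod m) b))"
    unfolding sum_lessThan_mult[OF m] sum_product kron_def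
    by (intro sum.cong refl) (simp add: m mult_ac)
  also have "\<dots> = (if e div m = e' div m \<and> e mod m = e' mod m then of_nat (n * m) else 0)"
    using A.rows_orthogonal B.rows_orthogonal m assms(3,4) by (simp add: less_mult_imp_div_less)
  also have "(e div m = e' div m \<and> e mod m = e' mod m) \<longleftrightarrow> e = e'"
    by (metis div_mult_mod_eq)
  finally show ?thesis .
qed

lemma fourier_like_kron:
  assumes "fourier_like n A" "fourier_like m B"
  shows "fourier_like (n * m) (kron A m B)"
proof -
  interpret A: fourier_like n A by fact
  interpret B: fourier_like m B by fact
  have m: "0 < m" by (rule B.size_pos)
  have div_less: "j div m < n" if "j < n * m" for j
    using that by (simp add: less_mult_imp_div_less)
  show ?thesis
  proof
    show "0 < n * m" using A.size_pos m by simp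
  next
    fix j l show "kron A m B j l = kron A m B l j"
      unfolding kron_def by (metis A.symmetric B.symmetric)
  next
    fix j l show "cnj (kron A m B j l) * kron A m B j l = 1"
      unfolding kron_def using A.unimodular B.unimodular by (simp add: algebra_simps)
  next
    fix j l show "kron A m B j l ^ (n * m) = 1"
      unfolding kron_def power_mult_distrib
      by (metis A.root_of_unity B.root_of_unity mult.commute power_mult power_one mult_1_right)
  next
    fix l show "kron A m B 0 l = 1" unfolding kron_def by (simp add: A.first_row B.first_row)
  next
    fix a b assume ab: "a < n * m" "b < n * m"
    obtain xa where xa: "xa < n" "\<forall>l<n. A xa l = A (a div m) l * A (b div m) l"
      using A.rows_mult_closed[OF div_less div_less] ab by blast
    obtain xb where xb: "xb < m" "\<forall>l<m. B xb l = B (a mod m) l * B (b mod m) l"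
      using B.rows_mult_closed m by (meson mod_less_divisor)
    show "\<exists>x<n * m. \<forall>l<n * m. kron A m B x l = kron A m B a l * kron A m B b l"
      using xa xb kron_index_less[OF xa(1) xb(1)] div_less m
      by (intro exI[of _ "xa * m + xb"]) (simp add: kron_def mult_ac)
  next
    fix a assume a: "a < n * m"
    obtain xa where xa: "xa < n" "\<forall>l<n. A xa l = cnj (A (a div m) l)"
      using A.rows_cnj_closed[OF div_less[OF a]] by blast
    obtain xb where xb: "xb < m" "\<forall>l<m. B xb l = cnj (B (a mod m) l)"
      using B.rows_cnj_closed m by (meson mod_less_divisor)
    show "\<exists>x<n * m. \<forall>l<n * m. kron A m B x l = cnj (kron A m B a l)"
      using xa xb kron_index_less[OF xa(1) xb(1)] div_less m
      by (intro exI[of _ "xa * m + xb"]) (simp add: kron_def)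
  qed (rule kron_rows_orthogonal[OF assms])
qed

lemma power_gcd_eq_one:
  fixes a :: "'a :: comm_monoid_mult"
  assumes "n \<noteq> 0" "a ^ n = 1" "a ^ m = 1"
  shows "a ^ gcd n m = 1"
proof -
  obtain x y where xy: "n * x = m * y + gcd n m"
    using bezout_nat[OF assms(1)] by blast
  have "1 = a ^ (n * x)" using assms(2) by (simp add: power_mult)
  also have "\<dots> = a ^ (m * y) * a ^ gcd n m" by (simp add: xy power_add)
  also have "\<dots> = a ^ gcd n m" using assms(3) by (simp add: power_mult)
  finally show ?thesis by simp
qed

lemma mult_eq_one_iff_coprime:
  assumes "fourier_like n A" "fourier_like m B" "coprime n m"
  shows "A a b * B c d = 1 \<longleftrightarrow> A a b = 1 \<and> B c d = 1"
proof
  assume prod: "A a b * B c d = 1"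
  then have "A a b ^ m = 1"
    using fourier_like.root_of_unity[OF assms(2), of c d] by (metis mult.right_neutral power_mult_distrib power_one)
  then have "A a b ^ gcd n m = 1"
    using power_gcd_eq_one fourier_like.size_pos[OF assms(1)] fourier_like.root_of_unity[OF assms(1)] by blast
  with assms(3) have "A a b = 1" by simp
  with prod show "A a b = 1 \<and> B c d = 1" by simp
qed simp

definition kron_pair :: "nat \<Rightarrow> (nat \<times> nat) \<times> (nat \<times> nat) \<Rightarrow> nat \<times> nat" where
  "kron_pair m = (\<lambda>((a, b), (c, d)). (a * m + c, b * m + d))"

lemma inj_on_kron_pair: "inj_on (kron_pair m) (X \<times> ({..<m} \<times> {..<m}))"
proof (rule inj_onI)
  fix x y assume "x \<in> X \<times> ({..<m} \<times> {..<m})" "y \<in> X \<times> ({..<m} \<times> {..<m})"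
    and eq: "kron_pair m x = kron_pair m y"
  then obtain a b c d a' b' c' d' where
    xy: "x = ((a, b), (c, d))" "y = ((a', b'), (c', d'))" "c < m" "d < m" "c' < m" "d' < m"
    by auto
  have "(a * m + c) div m = (a' * m + c') div m" "(a * m + c) mod m = (a' * m + c') mod m"
    "(b * m + d) div m = (b' * m + d') div m" "(b * m + d) mod m = (b' * m + d') mod m"
    using eq unfolding xy kron_pair_def by auto
  then show "x = y" using xy by simp
qed

lemma kron_pair_one_entries:
  "kron_pair m ` (one_entries n A \<times> one_entries m B) \<subseteq> one_entries (n * m) (kron A m B)"
  by (auto simp: kron_pair_def one_entries_def kron_def kron_index_less)

lemma card_kron_pair_one_entries:
  "card (kron_pair m ` (one_entries n A \<times> one_entries m B)) = num_ones n A * num_ones m B"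
proof -
  have "inj_on (kron_pair m) (one_entries n A \<times> one_entries m B)"
    by (rule inj_on_subset[OF inj_on_kron_pair]) (use one_entries_subset in blast)
  then show ?thesis
    by (simp add: card_image num_ones_eq_card card_cartesian_product)
qed

lemma num_ones_kron_coprime:
  assumes "fourier_like n A" "fourier_like m B" "coprime n m"
  shows "num_ones (n * m) (kron A m B) = num_ones n A * num_ones m B"
proof -
  have m: "0 < m" by (rule fourier_like.size_pos[OF assms(2)])
  have "one_entries (n * m) (kron A m B) \<subseteq> kron_pair m ` (one_entries n A \<times> one_entries m B)"
  proof
    fix y assume "y \<in> one_entries (n * m) (kron A m B)"
    then obtain i j where ij: "y = (i, j)" "i < n * m" "j < n * m" "kron A m B i j = 1"
      unfolding one_entries_def by auto
    then have "A (i div m) (j div m) = 1" "B (i mod m) (j mod m) = 1"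
      using mult_eq_one_iff_coprime[OF assms] unfolding kron_def by auto
    with ij m have "((i div m, j div m), (i mod m, j mod m)) \<in> one_entries n A \<times> one_entries m B"
      by (auto simp: one_entries_def less_mult_imp_div_less)
    moreover have "y = kron_pair m ((i div m, j div m), (i mod m, j mod m))"
      by (simp add: ij kron_pair_def)
    ultimately show "y \<in> kron_pair m ` (one_entries n A \<times> one_entries m B)" by blast
  qed
  with kron_pair_one_entries
  have "one_entries (n * m) (kron A m B) = kron_pair m ` (one_entries n A \<times> one_entries m B)"
    by blast
  then show ?thesis
    by (simp add: num_ones_eq_card card_kron_pair_one_entries)
qed

lemma num_ones_kron_gt:
  assumes "i1 < n" "j1 < n" "i2 < m" "j2 < m" "A i1 j1 \<noteq> 1" "A i1 j1 * B i2 j2 = 1"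
  shows "num_ones n A * num_ones m B < num_ones (n * m) (kron A m B)"
proof -
  let ?y = "(i1 * m + i2, j1 * m + j2)"
  have "?y \<in> one_entries (n * m) (kron A m B)"
    using assms by (simp add: one_entries_def kron_def kron_index_less)
  moreover have "?y \<notin> kron_pair m ` (one_entries n A \<times> one_entries m B)"
  proof
    assume "?y \<in> kron_pair m ` (one_entries n A \<times> one_entries m B)"
    then obtain a b c d where "(a, b) \<in> one_entries n A" "c < m" "d < m"
      and y: "?y = (a * m + c, b * m + d)"
      by (auto simp: kron_pair_def one_entries_def)
    moreover from y \<open>c < m\<close> \<open>d < m\<close> assms(3,4)
    have "a = i1" "b = j1"
      by (metis add.commute div_mult_self3 div_less not_less0 prod.inject plus_nat.add_0)+
    ultimately show False using assms(5) by (simp add: one_entries_def)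
  qed
  ultimately have "kron_pair m ` (one_entries n A \<times> one_entries m B) \<subset> one_entries (n * m) (kron A m B)"
    using kron_pair_one_entries by blast
  then have "card (kron_pair m ` (one_entries n A \<times> one_entries m B)) < card (one_entries (n * m) (kron A m B))"
    by (rule psubset_card_mono[OF finite_one_entries])
  then show ?thesis
    by (simp only: card_kron_pair_one_entries num_ones_eq_card)
qed

section \<open>Fourier matrices\<close>

lemma cis_root_of_unity_ne_1:
  assumes "k \<noteq> 0" "\<bar>k\<bar> < int n"
  shows "cis (2 * pi * of_int k / real n) \<noteq> 1"
proof
  assume "cis (2 * pi * of_int k / real n) = 1"
  then have "cos (2 * pi * of_int k / real n) = 1"
    by (metis cis.sel(1) one_complex.sel(1))
  then obtain j :: int where "2 * pi * of_int k / real n = of_int j * 2 * pi"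
    using cos_one_2pi_int by blast
  then have "2 * pi * (of_int k / real n) = 2 * pi * of_int j"
    by (simp add: mult_ac)
  then have "of_int k / real n = of_int j"
    using mult_cancel_left[of "2 * pi" "of_int k / real n" "of_int j"] by simp
  moreover have "0 < n" using assms by linarith
  ultimately have "(of_int k :: real) = of_int (j * int n)"
    by (simp add: divide_eq_eq)
  then have k: "k = j * int n"
    by (simp only: of_int_eq_iff)
  then have "j \<noteq> 0" using assms(1) by simp
  then have "1 * int n \<le> \<bar>j\<bar> * int n"
    by (intro mult_right_mono) auto
  then have "int n \<le> \<bar>k\<bar>" by (simp add: k abs_mult)
  then show False using assms(2) by simp
qed

lemma fourier_add: "fourier n (a + b) l = fourier n a l * fourier n b l"
  by (simp add: fourier_def cis_mult add_divide_distrib distrib_right algebra_simps)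

lemma fourier_multiple:
  assumes "0 < n"
  shows "fourier n (n * q) l = 1"
proof -
  have "2 * pi * real (n * q * l) / real n = 2 * pi * real (q * l)"
    using assms by (simp add: field_simps)
  then show ?thesis unfolding fourier_def by simp
qed

lemma fourier_power_size:
  assumes "0 < n"
  shows "fourier n j l ^ n = 1"
proof -
  have "real n * (2 * pi * real (j * l) / real n) = 2 * pi * real (j * l)"
    using assms by simp
  then show ?thesis unfolding fourier_def DeMoivre by simp
qed

lemma fourier_mod: "0 < n \<Longrightarrow> fourier n (a mod n) l = fourier n a l"
  by (metis fourier_add fourier_multiple mod_mult_div_eq mult_1_right)

lemma fourier_unimodular: "cnj (fourier n j l) * fourier n j l = 1"
  by (simp add: fourier_def cis_cnj cis_mult)

lemma fourier_rows_orthogonal: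
  assumes "e < n" "e' < n"
  shows "(\<Sum>j<n. fourier n e j * cnj (fourier n e' j)) = (if e = e' then of_nat n else 0)"
proof (cases "e = e'")
  case True
  then show ?thesis using fourier_unimodular by (simp add: mult.commute)
next
  case False
  define z where "z = cis (2 * pi * of_int (int e - int e') / real n)"
  have "fourier n e j * cnj (fourier n e' j) = z ^ j" for j
    unfolding fourier_def z_def DeMoivre cis_cnj cis_mult
    by (simp add: diff_divide_distrib algebra_simps)
  moreover have "z ^ n = 1"
    using assms unfolding z_def DeMoivre by simp
  moreover have "z \<noteq> 1"
    unfolding z_def using False assms by (intro cis_root_of_unity_ne_1) auto
  ultimately show ?thesis
    using False by (simp add: geometric_sum)
qed

lemma fourier_like_fourier:
  assumes "0 < n"
  shows "fourier_like n (fourier n)"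
proof
  fix j l show "fourier n j l = fourier n l j" by (simp add: fourier_def mult.commute)
next
  fix l show "fourier n 0 l = 1" by (simp add: fourier_def)
next
  fix a b assume "a < n" "b < n"
  show "\<exists>x<n. \<forall>l<n. fourier n x l = fourier n a l * fourier n b l"
    using assms by (intro exI[of _ "(a + b) mod n"]) (simp add: fourier_mod fourier_add)
next
  fix a assume "a < n"
  have "fourier n ((n - a) mod n) l * fourier n a l = 1" for l
    using assms \<open>a < n\<close> fourier_multiple[of n 1 l]
    by (simp add: fourier_mod fourier_add[symmetric])
  then have "fourier n ((n - a) mod n) l = cnj (fourier n a l)" for l
    by (metis fourier_unimodular mult_cancel_right mult_zero_left zero_neq_one)
  then show "\<exists>x<n. \<forall>l<n. fourier n x l = cnj (fourier n a l)"
    using assms by (intro exI[of _ "(n - a) mod n"]) auto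
qed (use assms in \<open>simp_all add: fourier_unimodular fourier_power_size fourier_rows_orthogonal\<close>)

lemma fourier_like_fourier_matrix:
  "\<forall>n\<in>set Ns. n \<ge> 1 \<Longrightarrow> fourier_like (prod_list Ns) (fourier_matrix Ns)"
proof (induction Ns)
  case Nil
  show ?case by unfold_locales auto
next
  case (Cons n Ns)
  then show ?case by (simp add: fourier_like_kron fourier_like_fourier)
qed

lemma fourier_matrix_has_entry:
  assumes "\<forall>n\<in>set Ns. n \<ge> 1" "prime p" "p dvd prod_list Ns"
  shows "\<exists>i j. i < prod_list Ns \<and> j < prod_list Ns \<and> fourier_matrix Ns i j = fourier p k 1"
  using assms(1,3)
proof (induction Ns)
  case Nil
  then show ?case using assms(2) by simp
next
  case (Cons n Ns)
  let ?m = "prod_list Ns"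
  interpret M: fourier_like ?m "fourier_matrix Ns"
    using Cons.prems by (intro fourier_like_fourier_matrix) simp
  have "p dvd n * ?m" using Cons.prems by simp
  then consider "p dvd n" | "p dvd ?m" using prime_dvd_mult_iff[OF assms(2)] by blast
  then show ?case
  proof cases
    case 1
    then obtain q where q: "n = p * q" by blast
    have "2 \<le> p" using assms(2) prime_ge_2_nat by blast
    moreover have "1 \<le> q" using q Cons.prems by (cases q) auto
    ultimately have "q < n" "k mod p < n" using q by (auto intro: less_le_trans[of _ p])
    moreover have "fourier n q (k mod p) = fourier p k 1"
    proof -
      have "fourier n q (k mod p) = fourier p (k mod p) 1"
        unfolding fourier_def q using \<open>1 \<le> q\<close> by (simp add: field_simps)
      also have "\<dots> = fourier p k 1" using fourier_mod \<open>2 \<le> p\<close> by simp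
      finally show ?thesis .
    qed
    ultimately show ?thesis
      using M.size_pos M.first_row kron_index_less[OF _ M.size_pos, of q n] kron_index_less[OF _ M.size_pos, of "k mod p" n]
      by (intro exI[of _ "q * ?m"] exI[of _ "(k mod p) * ?m"]) (simp add: kron_def)
  next
    case 2
    then obtain i j where ij: "i < ?m" "j < ?m" "fourier_matrix Ns i j = fourier p k 1"
      using Cons by auto
    have "0 < n" using Cons.prems by simp
    then show ?thesis
      using ij kron_index_less[OF \<open>0 < n\<close> ij(1)] kron_index_less[OF \<open>0 < n\<close> ij(2)]
      by (intro exI[of _ i] exI[of _ j]) (simp add: kron_def fourier_def)
  qed
qed

lemma num_ones_fourier_kron_gt:
  assumes "\<forall>n\<in>set Fs. n \<ge> 1" "\<forall>n\<in>set Gs. n \<ge> 1"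
    and "prime p" "p dvd prod_list Fs" "p dvd prod_list Gs"
  shows "num_ones (prod_list Fs) (fourier_matrix Fs) * num_ones (prod_list Gs) (fourier_matrix Gs)
    < num_ones (prod_list Fs * prod_list Gs) (kron (fourier_matrix Fs) (prod_list Gs) (fourier_matrix Gs))"
proof -
  have "1 < p" using prime_gt_1_nat[OF assms(3)] .
  then have p: "0 < p" "1 < p" by simp_all
  obtain i1 j1 where ij1: "i1 < prod_list Fs" "j1 < prod_list Fs" "fourier_matrix Fs i1 j1 = fourier p 1 1"
    using fourier_matrix_has_entry[OF assms(1,3,4)] by blast
  obtain i2 j2 where ij2: "i2 < prod_list Gs" "j2 < prod_list Gs" "fourier_matrix Gs i2 j2 = fourier p (p - 1) 1"
    using fourier_matrix_has_entry[OF assms(2,3,5)] by blast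
  have "fourier p 1 1 \<noteq> 1"
    using cis_root_of_unity_ne_1[of 1 p] p by (simp add: fourier_def)
  moreover have "fourier p 1 1 * fourier p (p - 1) 1 = 1"
    using fourier_multiple[OF p(1), of 1 1] p by (simp flip: fourier_add)
  ultimately show ?thesis
    using num_ones_kron_gt[OF ij1(1,2) ij2(1,2)] ij1(3) ij2(3) by simp
qed

theorem lemma5p6:
  fixes Fs Gs :: "nat list"
  assumes "Fs \<noteq> []" and "Gs \<noteq> []"
    and "\<forall>n\<in>set Fs. n \<ge> 1" and "\<forall>n\<in>set Gs. n \<ge> 1"
  shows "(gcd (prod_list Fs) (prod_list Gs) = 1 \<longrightarrow>
           num_ones (prod_list Fs * prod_list Gs)
               (kron (fourier_matrix Fs) (prod_list Gs) (fourier_matrix Gs))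
             = num_ones (prod_list Fs) (fourier_matrix Fs) * num_ones (prod_list Gs) (fourier_matrix Gs)
           \<and> defect (prod_list Fs * prod_list Gs)
               (kron (fourier_matrix Fs) (prod_list Gs) (fourier_matrix Gs))
             = defect (prod_list Fs) (fourier_matrix Fs) * defect (prod_list Gs) (fourier_matrix Gs))
       \<and> (gcd (prod_list Fs) (prod_list Gs) > 1 \<longrightarrow>
           defect (prod_list Fs * prod_list Gs)
               (kron (fourier_matrix Fs) (prod_list Gs) (fourier_matrix Gs))
             > defect (prod_list Fs) (fourier_matrix Fs) * defect (prod_list Gs) (fourier_matrix Gs))"
proof -
  have F: "fourier_like (prod_list Fs) (fourier_matrix Fs)"
    and G: "fourier_like (prod_list Gs) (fourier_matrix Gs)"
    using assms(3,4) by (simp_all add: fourier_like_fourier_matrix)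
  note defects = fourier_like.defect_eq_num_ones[OF F] fourier_like.defect_eq_num_ones[OF G]
    fourier_like.defect_eq_num_ones[OF fourier_like_kron[OF F G]]
  have "num_ones (prod_list Fs * prod_list Gs) (kron (fourier_matrix Fs) (prod_list Gs) (fourier_matrix Gs))
      = num_ones (prod_list Fs) (fourier_matrix Fs) * num_ones (prod_list Gs) (fourier_matrix Gs)"
    if "gcd (prod_list Fs) (prod_list Gs) = 1"
    using num_ones_kron_coprime[OF F G] that by (simp add: coprime_iff_gcd_eq_1)
  moreover have "num_ones (prod_list Fs) (fourier_matrix Fs) * num_ones (prod_list Gs) (fourier_matrix Gs)
      < num_ones (prod_list Fs * prod_list Gs) (kron (fourier_matrix Fs) (prod_list Gs) (fourier_matrix Gs))"
    if "gcd (prod_list Fs) (prod_list Gs) > 1"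
  proof -
    have "gcd (prod_list Fs) (prod_list Gs) \<noteq> 1" using that by simp
    then obtain p where "prime p" "p dvd gcd (prod_list Fs) (prod_list Gs)"
      using prime_factor_nat by blast
    then show ?thesis
      using num_ones_fourier_kron_gt[OF assms(3,4)] by simp
  qed
  ultimately show ?thesis
    unfolding defects by simp
qed

end
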